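(* Let $T\ge 1$ and $d$ be integers with $d>2T+1$, and let $n=T+1$. For every deterministic algorithm that interacts for $T$ rounds with a one-sided oracle and then outputs a vector $\mathbf{w}_{T+1}\in\mathbb{R}^d$, there exists a matrix $A\in\mathbb{R}^{(T+1)\times d}$ such that \[ \max_{l\in[T+1]}\|A_l\|_2=1\qquad\text{and}\qquad \max_{\mathbf{w}\in\mathbb{R}^d:\|\mathbf{w}\|_2\le 1}\ \min_{\mathbf{p}\in\Delta^{n-1}}\mathbf{p}^\top A\mathbf{w}\ \ge\ \frac{1}{\sqrt{T+1}}, \] yet the output of the algorithm after $T$ rounds of interaction with $\mathcal{O}_1^A$ satisfies $\min_{\mathbf{p}\in\Delta^{n-1}}\mathbf{p}^\top A\mathbf{w}_{T+1}\le 0$.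
   Context: $\Delta^{n-1}=\{\mathbf{p}\in\mathbb{R}^n:\ p_i\ge 0\ \forall i,\ \sum_i p_i=1\}$ is the probability simplex; $A_l$ denotes the $l$-th row of $A$; $[n]=\{1,\dots,n\}$. The one-sided oracle $\mathcal{O}_1^A$: given a query $(l,\mathbf{w})\in[n]\times\mathbb{R}^d$, it returns $A\mathbf{w}$ and the row $A_l$. A deterministic algorithm interacting with the oracle for $T$ rounds chooses, at each round $t=1,\dots,T$, a query $(l_t,\mathbf{w}_t)$ as a deterministic function of the oracle responses received in rounds $1,\dots,t-1$, and after round $T$ outputs $\mathbf{w}_{T+1}\in\mathbb{R}^d$ as a deterministic function of all $T$ responses. Queries are not restricted to the unit ball. *)

theory Defs
  imports "HOL-Analysis.Analysis"
begin

text \<open>Matrices A in R^{n x d} are rendered as real^'d^'n (rows indexed by 'n, A$l is row l).\<close>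

definition prob_simplex :: "(real^'n::finite) set" where
  "prob_simplex = {p. (\<forall>i. p $ i \<ge> 0) \<and> (\<Sum>i\<in>UNIV. p $ i) = 1}"

definition margin :: "real^'d^'n \<Rightarrow> real^'d \<Rightarrow> real" where
  "margin A w = (INF p\<in>prob_simplex. p \<bullet> (A *v w))"

definition oracle1 :: "real^'d^'n \<Rightarrow> ('n \<times> (real^'d)) \<Rightarrow> (real^'n) \<times> (real^'d)" where
  "oracle1 A q = (A *v snd q, A $ fst q)"

fun transcript :: "(((real^'n) \<times> (real^'d)) list \<Rightarrow> ('n \<times> (real^'d))) \<Rightarrow> real^'d^'n \<Rightarrow> nat
    \<Rightarrow> ((real^'n) \<times> (real^'d)) list" where
  "transcript query A 0 = []"
| "transcript query A (Suc t) =
     transcript query A t @ [oracle1 A (query (transcript query A t))]"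

end

theory Submission
  imports Defs
begin

text \<open>The adversary answers the algorithm lazily. A row of A stays undetermined until it is
  queried; it is then fixed as a unit vector orthogonal to all query points seen so far and to
  all rows fixed before. Since answers only involve fixed rows and inner products of the
  (future) other rows with past query points, which are kept zero, the transcript does not
  depend on how the open rows are completed. At most T of the T + 1 rows are fixed during the
  interaction; at the end all open rows are completed orthonormally and orthogonally to the
  output, so an open row l gives (A w) l = 0. The rows of A are orthonormal, hence
  w = (\<Sum>k. A k) / sqrt (T + 1) is a unit vector with margin 1 / sqrt (T + 1).
  A dimension d > 2T + 1 leaves room for all the orthogonality constraints.\<close>

definition unit_orthogonal_to :: "(real^'d) set \<Rightarrow> real^'d" where
  "unit_orthogonal_to S = (SOME u. norm u = 1 \<and> (\<forall>s\<in>S. u \<bullet> s = 0))"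

lemma unit_orthogonal_to:
  fixes S :: "(real^'d) set"
  assumes "finite S" "card S < CARD('d)"
  shows "norm (unit_orthogonal_to S) = 1" "\<forall>s\<in>S. unit_orthogonal_to S \<bullet> s = 0"
proof -
  have "dim S < DIM(real^'d)" using dim_le_card'[OF assms(1)] assms(2) by simp
  then obtain x :: "real^'d" where x: "x \<noteq> 0" "\<And>y. y \<in> span S \<Longrightarrow> orthogonal x y"
    using orthogonal_to_subspace_exists by blast
  have "norm (x /\<^sub>R norm x) = 1 \<and> (\<forall>s\<in>S. (x /\<^sub>R norm x) \<bullet> s = 0)"
    using x span_base[of _ S] by (auto simp: orthogonal_def)
  then have "norm (unit_orthogonal_to S) = 1 \<and> (\<forall>s\<in>S. unit_orthogonal_to S \<bullet> s = 0)"
    unfolding unit_orthogonal_to_def by (rule someI)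
  then show "norm (unit_orthogonal_to S) = 1" "\<forall>s\<in>S. unit_orthogonal_to S \<bullet> s = 0"
    by auto
qed

text \<open>A zero row of B encodes a row not yet fixed by the adversary.\<close>

definition fix_row :: "(real^'d) set \<Rightarrow> real^'d^'n \<Rightarrow> 'n \<Rightarrow> real^'d^'n" where
  "fix_row X B l =
     (if B $ l = 0 then (\<chi> k. if k = l then unit_orthogonal_to (X \<union> (\<lambda>k. B $ k) ` (- {l})) else B $ k)
      else B)"

lemma fix_row_other: "k \<noteq> l \<Longrightarrow> fix_row X B l $ k = B $ k"
  by (simp add: fix_row_def)

lemma fix_row_fixed: "B $ l \<noteq> 0 \<Longrightarrow> fix_row X B l = B"
  by (simp add: fix_row_def)

lemma fix_row_new:
  fixes B :: "real^'d^'n"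
  assumes "finite X" "card X + CARD('n) \<le> CARD('d)" "B $ l = 0"
  shows "norm (fix_row X B l $ l) = 1"
    and "\<forall>x\<in>X. fix_row X B l $ l \<bullet> x = 0"
    and "\<forall>k. k \<noteq> l \<longrightarrow> fix_row X B l $ l \<bullet> B $ k = 0"
proof -
  let ?S = "X \<union> (\<lambda>k. B $ k) ` (- {l})"
  have "card ((\<lambda>k. B $ k) ` (- {l})) \<le> card (- {l} :: 'n set)" by (rule card_image_le) simp
  also have "\<dots> = CARD('n) - 1" by (simp add: Compl_eq_Diff_UNIV card_Diff_singleton)
  finally have "card ?S \<le> card X + (CARD('n) - 1)"
    using card_Un_le[of X "(\<lambda>k. B $ k) ` (- {l})"] by linarith
  moreover have "CARD('n) \<ge> 1" by (simp add: Suc_leI)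
  ultimately have "card ?S < CARD('d)" using assms(2) by linarith
  then have u: "norm (unit_orthogonal_to ?S) = 1" "\<forall>s\<in>?S. unit_orthogonal_to ?S \<bullet> s = 0"
    using unit_orthogonal_to[of ?S] assms(1) by auto
  have "fix_row X B l $ l = unit_orthogonal_to ?S" using assms(3) by (simp add: fix_row_def)
  then show "norm (fix_row X B l $ l) = 1" "\<forall>x\<in>X. fix_row X B l $ l \<bullet> x = 0"
    "\<forall>k. k \<noteq> l \<longrightarrow> fix_row X B l $ l \<bullet> B $ k = 0"
    using u by auto
qed

lemma fix_row_nonzero:
  fixes B :: "real^'d^'n"
  assumes "finite X" "card X + CARD('n) \<le> CARD('d)"
  shows "fix_row X B l $ l \<noteq> 0"
proof (cases "B $ l = 0")
  case True
  then show ?thesis using fix_row_new(1)[OF assms True] by auto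
next
  case False
  then show ?thesis by (simp add: fix_row_fixed)
qed

lemma fixed_rows_fix_row: "{k. fix_row X B l $ k \<noteq> 0} \<subseteq> insert l {k. B $ k \<noteq> 0}"
  by (auto simp: fix_row_other)

definition orthonormal_fixed_rows :: "real^'d^'n \<Rightarrow> bool" where
  "orthonormal_fixed_rows B \<longleftrightarrow>
     (\<forall>k. B $ k \<noteq> 0 \<longrightarrow> norm (B $ k) = 1) \<and> (\<forall>k j. k \<noteq> j \<longrightarrow> B $ k \<bullet> B $ j = 0)"

lemma orthonormal_fixed_rows_zero: "orthonormal_fixed_rows 0"
  by (simp add: orthonormal_fixed_rows_def)

lemma orthonormal_fixed_rows_fix_row:
  fixes B :: "real^'d^'n"
  assumes X: "finite X" "card X + CARD('n) \<le> CARD('d)" and B: "orthonormal_fixed_rows B"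
  shows "orthonormal_fixed_rows (fix_row X B l)"
proof (cases "B $ l = 0")
  case False
  then show ?thesis using B by (simp add: fix_row_fixed)
next
  case True
  note new = fix_row_new[OF X True]
  show ?thesis unfolding orthonormal_fixed_rows_def
  proof (intro conjI allI impI)
    fix k assume "fix_row X B l $ k \<noteq> 0"
    then show "norm (fix_row X B l $ k) = 1"
      using new B by (cases "k = l") (auto simp: fix_row_other orthonormal_fixed_rows_def)
  next
    fix k j :: 'n assume "k \<noteq> j"
    then show "fix_row X B l $ k \<bullet> fix_row X B l $ j = 0"
      using new B
      by (cases "k = l"; cases "j = l")
         (auto simp: fix_row_other orthonormal_fixed_rows_def inner_commute)
  qed
qed

definition extends :: "(real^'d) set \<Rightarrow> real^'d^'n \<Rightarrow> real^'d^'n \<Rightarrow> bool" where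
  "extends X B A \<longleftrightarrow>
     (\<forall>k. B $ k \<noteq> 0 \<longrightarrow> A $ k = B $ k) \<and> (\<forall>k. B $ k = 0 \<longrightarrow> (\<forall>x\<in>X. A $ k \<bullet> x = 0))"

lemma extends_refl: "extends X B B"
  by (simp add: extends_def)

lemma extends_trans: "extends X B C \<Longrightarrow> extends X C A \<Longrightarrow> extends X B A"
  unfolding extends_def by metis

lemma extends_antimono: "X \<subseteq> Y \<Longrightarrow> extends Y B A \<Longrightarrow> extends X B A"
  unfolding extends_def by blast

lemma extends_fix_row:
  fixes B :: "real^'d^'n"
  assumes "finite Y" "card Y + CARD('n) \<le> CARD('d)" "X \<subseteq> Y"
  shows "extends X B (fix_row Y B l)"
  unfolding extends_def
proof (intro conjI allI impI ballI)
  fix k assume "B $ k \<noteq> 0"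
  then show "fix_row Y B l $ k = B $ k"
    by (cases "k = l") (simp_all add: fix_row_fixed fix_row_other)
next
  fix k x assume "B $ k = 0" "x \<in> X"
  then show "fix_row Y B l $ k \<bullet> x = 0"
    using fix_row_new(2)[OF assms(1,2), of B l] assms(3)
    by (cases "k = l") (auto simp: fix_row_other)
qed

lemma extends_fold_fix_row:
  fixes B :: "real^'d^'n"
  assumes "finite X" "card X + CARD('n) \<le> CARD('d)"
  shows "extends X B (foldl (fix_row X) B ls)"
proof (induction ls arbitrary: B)
  case Nil
  then show ?case by (simp add: extends_refl)
next
  case (Cons l ls)
  show ?case
    using extends_trans[OF extends_fix_row[OF assms order_refl, of B l] Cons.IH[of "fix_row X B l"]]
    by simp
qed

lemma fold_fix_row_nonzero:
  fixes B :: "real^'d^'n"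
  assumes "finite X" "card X + CARD('n) \<le> CARD('d)" "l \<in> set ls"
  shows "foldl (fix_row X) B ls $ l \<noteq> 0"
  using assms(3)
proof (induction ls arbitrary: B)
  case Nil
  then show ?case by simp
next
  case (Cons k ls)
  show ?case
  proof (cases "l = k")
    case True
    have "fix_row X B l $ l \<noteq> 0" using fix_row_nonzero[OF assms(1,2)] .
    then show ?thesis using extends_fold_fix_row[OF assms(1,2), of "fix_row X B l" ls] True
      by (simp add: extends_def)
  next
    case False
    then show ?thesis using Cons by simp
  qed
qed

lemma orthonormal_fixed_rows_fold_fix_row:
  fixes B :: "real^'d^'n"
  assumes "finite X" "card X + CARD('n) \<le> CARD('d)" "orthonormal_fixed_rows B"
  shows "orthonormal_fixed_rows (foldl (fix_row X) B ls)"
  using assms(3)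
  by (induction ls arbitrary: B) (simp_all add: orthonormal_fixed_rows_fix_row[OF assms(1,2)])

lemma extends_mult_eq:
  assumes "extends X B A" "w \<in> X"
  shows "A *v w = B *v w"
proof -
  have "A $ k \<bullet> w = B $ k \<bullet> w" for k
    using assms unfolding extends_def by (cases "B $ k = 0") auto
  then show ?thesis by (simp add: vec_eq_iff matrix_vector_mul_component)
qed

fun simulation :: "(((real^'n) \<times> (real^'d)) list \<Rightarrow> ('n \<times> (real^'d))) \<Rightarrow> nat
    \<Rightarrow> ((real^'n) \<times> (real^'d)) list \<times> (real^'d^'n) \<times> (real^'d) list" where
  "simulation query 0 = ([], 0, [])"
| "simulation query (Suc t) =
     (let h = fst (simulation query t); B = fst (snd (simulation query t));
          W = snd (snd (simulation query t)); q = query h; W' = W @ [snd q];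
          B' = fix_row (set W') B (fst q)
      in (h @ [oracle1 B' q], B', W'))"

definition "sim_transcript query t = fst (simulation query t)"
definition "sim_matrix query t = fst (snd (simulation query t))"
definition "sim_points query t = snd (snd (simulation query t))"

lemma simulation_0: "sim_transcript query 0 = []" "sim_matrix query 0 = 0" "sim_points query 0 = []"
  by (simp_all add: sim_transcript_def sim_matrix_def sim_points_def)

lemma simulation_Suc:
  "sim_points query (Suc t) = sim_points query t @ [snd (query (sim_transcript query t))]"
  "sim_matrix query (Suc t) =
     fix_row (set (sim_points query (Suc t))) (sim_matrix query t) (fst (query (sim_transcript query t)))"
  "sim_transcript query (Suc t) =
     sim_transcript query t @ [oracle1 (sim_matrix query (Suc t)) (query (sim_transcript query t))]"
  by (simp_all add: sim_transcript_def sim_matrix_def sim_points_def Let_def)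

lemma length_sim_points: "length (sim_points query t) = t"
  by (induction t) (simp_all add: simulation_0 simulation_Suc)

lemma sim_points_mono: "s \<le> t \<Longrightarrow> set (sim_points query s) \<subseteq> set (sim_points query t)"
  by (induction t rule: dec_induct) (auto simp: simulation_Suc)

lemma card_fixed_rows_sim_matrix: "card {k. sim_matrix query t $ k \<noteq> 0} \<le> t"
proof (induction t)
  case 0
  then show ?case by (simp add: simulation_0)
next
  case (Suc t)
  let ?l = "fst (query (sim_transcript query t))"
  have "card {k. sim_matrix query (Suc t) $ k \<noteq> 0} \<le> card (insert ?l {k. sim_matrix query t $ k \<noteq> 0})"
    unfolding simulation_Suc(2)[of query t] by (intro card_mono fixed_rows_fix_row) simp
  also have "\<dots> \<le> Suc t" using Suc by (simp add: card_insert_if)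
  finally show ?case .
qed

context
  fixes T :: nat and query :: "((real^'n) \<times> (real^'d)) list \<Rightarrow> ('n \<times> (real^'d))"
  assumes card_rows: "CARD('n) = T + 1" and card_cols: "CARD('d) > 2 * T + 1"
begin

lemma card_sim_points: "t \<le> T \<Longrightarrow> card (set (sim_points query t)) + CARD('n) \<le> CARD('d)"
  using card_length[of "sim_points query t"] card_rows card_cols by (simp add: length_sim_points)

lemma orthonormal_fixed_rows_sim_matrix:
  "t \<le> T \<Longrightarrow> orthonormal_fixed_rows (sim_matrix query t)"
  by (induction t)
     (simp_all add: simulation_0 orthonormal_fixed_rows_zero simulation_Suc(2)
       orthonormal_fixed_rows_fix_row card_sim_points)

lemma extends_sim_matrix:
  "s \<le> t \<Longrightarrow> t \<le> T \<Longrightarrow> extends (set (sim_points query s)) (sim_matrix query s) (sim_matrix query t)"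
proof (induction t rule: dec_induct)
  case base
  show ?case by (rule extends_refl)
next
  case (step t)
  have "extends (set (sim_points query s)) (sim_matrix query t) (sim_matrix query (Suc t))"
    unfolding simulation_Suc(2)[of query t]
    using card_sim_points[OF step.prems] sim_points_mono[OF le_SucI[OF step.hyps(1)]]
    by (intro extends_fix_row) auto
  then show ?case using step extends_trans by simp
qed

lemma transcript_eq_sim_transcript:
  assumes A: "extends (set (sim_points query T)) (sim_matrix query T) A"
  shows "t \<le> T \<Longrightarrow> transcript query A t = sim_transcript query t"
proof (induction t)
  case 0
  then show ?case by (simp add: simulation_0)
next
  case (Suc t)
  let ?q = "query (sim_transcript query t)" and ?B = "sim_matrix query (Suc t)"
  have ext: "extends (set (sim_points query (Suc t))) ?B A"
    using extends_trans[OF extends_sim_matrix[OF Suc.prems order_refl]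
        extends_antimono[OF sim_points_mono[OF Suc.prems] A]] .
  have "?B $ fst ?q \<noteq> 0"
    unfolding simulation_Suc(2)[of query t] using card_sim_points[OF Suc.prems]
    by (intro fix_row_nonzero) auto
  then have "A $ fst ?q = ?B $ fst ?q" using ext by (simp add: extends_def)
  moreover have "A *v snd ?q = ?B *v snd ?q" using ext by (rule extends_mult_eq) (simp add: simulation_Suc)
  ultimately have "oracle1 A ?q = oracle1 ?B ?q" by (simp add: oracle1_def)
  then show ?case using Suc by (simp add: simulation_Suc(3))
qed

end

lemma axis_in_prob_simplex: "axis l 1 \<in> prob_simplex"
  by (simp add: prob_simplex_def axis_def)

lemma margin_le_component: "margin (A :: real^'d^'n) w \<le> (A *v w) $ l"
proof -
  have "- norm (A *v w) \<le> p \<bullet> (A *v w)" if p: "p \<in> prob_simplex" for p :: "real^'n"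
  proof -
    have "norm p \<le> (\<Sum>i\<in>UNIV. \<bar>p $ i\<bar>)" by (rule norm_le_l1_cart)
    also have "\<dots> = 1" using p by (simp add: prob_simplex_def)
    finally have "\<bar>p \<bullet> (A *v w)\<bar> \<le> norm (A *v w)"
      using Cauchy_Schwarz_ineq2[of p "A *v w"] by (simp add: mult_left_le_one_le order_trans)
    then show ?thesis by linarith
  qed
  then have "margin A w \<le> axis l 1 \<bullet> (A *v w)"
    unfolding margin_def by (intro cINF_lower bdd_belowI2 axis_in_prob_simplex)
  then show ?thesis by (simp add: inner_axis')
qed

lemma margin_ge:
  fixes A :: "real^'d^'n"
  assumes "\<And>l. c \<le> (A *v w) $ l"
  shows "c \<le> margin A w"
  unfolding margin_def
proof (rule cINF_greatest)
  show "prob_simplex \<noteq> {}" using axis_in_prob_simplex by blast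
next
  fix p :: "real^'n" assume p: "p \<in> prob_simplex"
  have "c = (\<Sum>i\<in>UNIV. p $ i * c)" using p by (simp add: prob_simplex_def sum_distrib_right[symmetric])
  also have "\<dots> \<le> (\<Sum>i\<in>UNIV. p $ i * (A *v w) $ i)"
    using p assms by (intro sum_mono mult_left_mono) (auto simp: prob_simplex_def)
  also have "\<dots> = p \<bullet> (A *v w)" by (simp add: inner_vec_def)
  finally show "c \<le> p \<bullet> (A *v w)" .
qed

lemma margin_le_one:
  fixes A :: "real^'d^'n"
  assumes "\<And>k. norm (A $ k) = 1" "norm w \<le> 1"
  shows "margin A w \<le> 1"
proof -
  fix l :: 'n
  have "margin A w \<le> A $ l \<bullet> w" using margin_le_component[of A w l]
    by (simp add: matrix_vector_mul_component)
  also have "\<dots> \<le> norm (A $ l) * norm w" by (rule norm_cauchy_schwarz)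
  also have "\<dots> \<le> 1" using assms by simp
  finally show ?thesis .
qed

text \<open>The normalized sum of orthonormal rows has all components 1 / sqrt n.\<close>

lemma orthonormal_rows_max_margin:
  fixes A :: "real^'d^'n"
  assumes unit: "\<And>k. norm (A $ k) = 1" and orth: "\<And>k j. k \<noteq> j \<Longrightarrow> A $ k \<bullet> A $ j = 0"
  shows "(SUP w\<in>cball 0 1. margin A w) \<ge> 1 / sqrt CARD('n)"
proof -
  define c where "c = 1 / sqrt CARD('n)"
  define w where "w = c *\<^sub>R (\<Sum>k\<in>UNIV. A $ k)"
  have "A $ i \<bullet> A $ k = (if k = i then 1 else 0)" for i k
    using unit[of i] orth[of i k] by (auto simp: norm_eq_sqrt_inner)
  then have "(A *v w) $ i = c" for i
    by (simp add: w_def matrix_vector_mul_component inner_sum_right)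
  then have "c \<le> margin A w" by (intro margin_ge) simp
  have "(norm (\<Sum>k\<in>UNIV. A $ k))\<^sup>2 = (\<Sum>k\<in>UNIV. (norm (A $ k))\<^sup>2)"
    by (rule norm_sum_Pythagorean) (auto simp: pairwise_def orthogonal_def orth)
  then have "norm (\<Sum>k\<in>UNIV. A $ k) = sqrt CARD('n)"
    using unit by (simp add: real_sqrt_unique)
  then have "norm w = 1" by (simp add: w_def c_def)
  have "bdd_above (margin A ` cball 0 1)"
    using margin_le_one[OF unit] by (intro bdd_aboveI2) simp
  then show ?thesis
    using cSUP_upper2[of "margin A" "cball 0 1" w c] \<open>c \<le> margin A w\<close> \<open>norm w = 1\<close>
    by (simp add: c_def)
qed

theorem theorem1:
  fixes T :: nat
    and query :: "((real^'n) \<times> (real^'d)) list \<Rightarrow> ('n \<times> (real^'d))"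
    and out :: "((real^'n) \<times> (real^'d)) list \<Rightarrow> real^'d"
  assumes "T \<ge> 1"
    and cn: "CARD('n) = T + 1"
    and cd: "CARD('d) > 2 * T + 1"
  shows "\<exists>A :: real^'d^'n.
           Max (range (\<lambda>l. norm (A $ l))) = 1
         \<and> (SUP w\<in>cball 0 1. margin A w) \<ge> 1 / sqrt (real T + 1)
         \<and> margin A (out (transcript query A T)) \<le> 0"
proof -
  let ?B = "sim_matrix query T" and ?w = "out (sim_transcript query T)"
  define X where "X = insert ?w (set (sim_points query T))"
  obtain ls :: "'n list" where ls: "set ls = UNIV" using finite_list[of "UNIV :: 'n set"] by auto
  define A where "A = foldl (fix_row X) ?B ls"
  have "card X \<le> T + 1"
    using card_length[of "sim_points query T"] by (simp add: X_def length_sim_points card_insert_if)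
  then have X: "finite X" "card X + CARD('n) \<le> CARD('d)" using cn cd by (auto simp: X_def)
  have ext: "extends X ?B A" unfolding A_def using extends_fold_fix_row[OF X] .
  have A: "orthonormal_fixed_rows A" unfolding A_def
    by (rule orthonormal_fixed_rows_fold_fix_row[OF X orthonormal_fixed_rows_sim_matrix[OF cn cd order_refl]])
  have unit: "norm (A $ k) = 1" for k
    using A fold_fix_row_nonzero[OF X] ls by (simp add: A_def orthonormal_fixed_rows_def)
  have orth: "k \<noteq> j \<Longrightarrow> A $ k \<bullet> A $ j = 0" for k j
    using A by (simp add: orthonormal_fixed_rows_def)
  have "{k. ?B $ k \<noteq> 0} \<noteq> UNIV" using card_fixed_rows_sim_matrix[of query T] cn by auto
  then obtain l where "?B $ l = 0" by blast
  then have open_row: "(A *v ?w) $ l = 0"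
    using ext by (simp add: extends_def X_def matrix_vector_mul_component)
  have "set (sim_points query T) \<subseteq> X" by (auto simp: X_def)
  then have "transcript query A T = sim_transcript query T"
    using transcript_eq_sim_transcript[OF cn cd extends_antimono[OF _ ext] order_refl] by blast
  then have "margin A (out (transcript query A T)) \<le> 0"
    using margin_le_component[of A ?w l] open_row by simp
  moreover have "(SUP w\<in>cball 0 1. margin A w) \<ge> 1 / sqrt (real T + 1)"
    using orthonormal_rows_max_margin[OF unit orth] cn by (simp add: add.commute)
  moreover have "range (\<lambda>l. norm (A $ l)) = {1}" using unit by auto
  ultimately show ?thesis by auto
qed

end
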